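(* Let $A\subset\mathbb R^2$ be the closed triangle with vertices $(-1,-1),(1,0),(0,1)$. There exist compact convex domains $A_\epsilon\subset A$ $(\epsilon>0$ small$)$ with smooth boundaries, containing the origin in their interiors, with $\mathrm{area}(A\setminus A_\epsilon)=O(\epsilon^2)$, such that $(1-2\epsilon)^2/3\le\rho_{\rm sys}(\mathbb T^2\times A_\epsilon)\le 1/(3-O(\epsilon^2))$; in particular $\rho_{\rm sys}(\mathbb T^2\times A_\epsilon)\to\frac13$ as $\epsilon\to0$, so $\rho_{\rm sys}(\mathbb T^2\times A)=\frac13$.
   Context: $\mathbb T^2=\mathbb R^2/\mathbb Z^2$, $T^*\mathbb T^2=\mathbb T^2\times\mathbb R^2$, $\lambda_{\rm can}=p_1dq_1+p_2dq_2$. For a compact star-shaped $B\subset\mathbb R^2$ with smooth boundary, $\mathrm{sys}(\mathbb T^2\times\partial B)$ is the minimal action of a closed Reeb orbit of $\lambda_{\rm can}|_{\mathbb T^2\times\partial B}$, $\mathrm{vol}=\int\lambda_{\rm can}\wedge d\lambda_{\rm can}=2\,\mathrm{area}(B)$, and $\rho_{\rm sys}=\mathrm{sys}^2/\mathrm{vol}$. For non-smooth $\partial A$, $\rho_{\rm sys}(\mathbb T^2\times A)$ is defined as the limit of $\rho_{\rm sys}(\mathbb T^2\times A_\epsilon)$ along smoothings $A_\epsilon\to A$. *)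

theory Defs
  imports "HOL-Analysis.Analysis"
begin

(* R^2 is modelled as real \<times> real.  A point of T^*T^2 (lifted to the universal
   cover R^2 \<times> R^2) is a pair (q, p). *)

type_synonym pt2 = "real \<times> real"

definition dot2 :: "pt2 \<Rightarrow> pt2 \<Rightarrow> real" where
  "dot2 a b = fst a * fst b + snd a * snd b"

coinductive smooth2 :: "(pt2 \<Rightarrow> real) \<Rightarrow> bool" where
  "(\<And>x. (f has_derivative (\<lambda>h. fst h * f1 x + snd h * f2 x)) (at x))
    \<Longrightarrow> smooth2 f1 \<Longrightarrow> smooth2 f2 \<Longrightarrow> smooth2 f"

definition smooth_boundary :: "pt2 set \<Rightarrow> bool" where
  "smooth_boundary B \<longleftrightarrow> (\<exists>g. smooth2 g \<and> B = {x. g x \<le> 0} \<and>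
      (\<forall>x. g x = 0 \<longrightarrow> (\<exists>D. (g has_derivative D) (at x) \<and> D \<noteq> (\<lambda>_. 0))))"

definition lam_can :: "pt2 \<times> pt2 \<Rightarrow> pt2 \<times> pt2 \<Rightarrow> real" where
  "lam_can x v = dot2 (snd x) (fst v)"

definition dlam_can :: "pt2 \<times> pt2 \<Rightarrow> pt2 \<times> pt2 \<Rightarrow> real" where
  "dlam_can v w = dot2 (snd v) (fst w) - dot2 (snd w) (fst v)"

definition tangent_bd :: "pt2 set \<Rightarrow> pt2 \<Rightarrow> pt2 set" where
  "tangent_bd B p = {v. \<exists>c. (\<forall>s. c s \<in> frontier B) \<and> c 0 = p \<and>
                        (c has_vector_derivative v) (at 0)}"

definition tangent_hyp :: "pt2 set \<Rightarrow> pt2 \<times> pt2 \<Rightarrow> (pt2 \<times> pt2) set" where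
  "tangent_hyp B x = UNIV \<times> tangent_bd B (snd x)"

(* closed Reeb orbit of \<lambda>_can restricted to T^2 \<times> \<partial>B, of period T,
   lifted to R^2 \<times> R^2 (closed modulo Z^2 in q) *)
definition closed_reeb_orbit :: "pt2 set \<Rightarrow> (real \<Rightarrow> pt2 \<times> pt2) \<Rightarrow> real \<Rightarrow> bool" where
  "closed_reeb_orbit B \<gamma> T \<longleftrightarrow> T > 0 \<and>
     (\<forall>t\<in>{0..T}.
        \<gamma> differentiable (at t within {0..T}) \<and>
        snd (\<gamma> t) \<in> frontier B \<and>
        vector_derivative \<gamma> (at t within {0..T}) \<in> tangent_hyp B (\<gamma> t) \<and>
        lam_can (\<gamma> t) (vector_derivative \<gamma> (at t within {0..T})) = 1 \<and>
        (\<forall>w\<in>tangent_hyp B (\<gamma> t). dlam_can (vector_derivative \<gamma> (at t within {0..T})) w = 0)) \<and>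
     snd (\<gamma> T) = snd (\<gamma> 0) \<and>
     fst (fst (\<gamma> T)) - fst (fst (\<gamma> 0)) \<in> \<int> \<and>
     snd (fst (\<gamma> T)) - snd (fst (\<gamma> 0)) \<in> \<int>"

definition reeb_action :: "(real \<Rightarrow> pt2 \<times> pt2) \<Rightarrow> real \<Rightarrow> real" where
  "reeb_action \<gamma> T = integral {0..T} (\<lambda>t. lam_can (\<gamma> t) (vector_derivative \<gamma> (at t within {0..T})))"

definition sys :: "pt2 set \<Rightarrow> real" where
  "sys B = Inf {reeb_action \<gamma> T | \<gamma> T. closed_reeb_orbit B \<gamma> T}"

(* vol(T^2 \<times> \<partial>B) = 2 area(B) *)
definition rho_sys :: "pt2 set \<Rightarrow> real" where
  "rho_sys B = (sys B)\<^sup>2 / (2 * measure lebesgue B)"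

definition triangleA :: "pt2 set" where
  "triangleA = convex hull {(-1,-1), (1,0), (0,1)}"

end

theory Submission
  imports Defs
begin

(* A_eps is the sublevel set of the soft maximum
     exp (b <n1,x>) + exp (b <n2,x>) + exp (b <n3,x>) <= exp b,   b = 1 / eps^2,
   of the three linear forms with A = {x. <n_i,x> <= 1}.  It is convex with smooth boundary and
   lies between (1 - ln 3 / b) A and A, which bounds the area defect by 3 ln 3 / b.

   Along a closed Reeb orbit of T^2 x dB the momentum stays at a point p of dB while q moves in
   the normal direction of dB at p.  Closing up in T^2 makes the displacement k a nonzero integer
   vector, and the period is <k,p> = max over B of <k,x>.  Every nonzero integer vector has
   <k,v> >= 1 at some vertex v of A, so all periods are at least 1 - ln 3 / b; the orbit through
   the rightmost point of B has k = (1,0) and period at most 1. *)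

lemma dot2_linear_right: "dot2 a (u *\<^sub>R x + v *\<^sub>R y) = u * dot2 a x + v * dot2 a y"
  by (simp add: dot2_def algebra_simps)

lemma dot2_sum_left: "dot2 (\<Sum>n\<in>N. c n *\<^sub>R n) h = (\<Sum>n\<in>N. c n * dot2 n h)"
proof -
  have "dot2 (\<Sum>n\<in>N. c n *\<^sub>R n) h = (\<Sum>n\<in>N. c n * fst n) * fst h + (\<Sum>n\<in>N. c n * snd n) * snd h"
    by (simp add: dot2_def fst_sum snd_sum)
  also have "\<dots> = (\<Sum>n\<in>N. c n * fst n * fst h + c n * snd n * snd h)"
    by (simp add: sum_distrib_right sum.distrib)
  finally show ?thesis by (simp add: dot2_def algebra_simps)
qed

lemma dot2_swap_if_parallel:
  assumes "fst a * snd b = snd a * fst b"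
  shows "dot2 a x * dot2 b y = dot2 a y * dot2 b x"
proof -
  have "dot2 a x * dot2 b y - dot2 a y * dot2 b x
          = (fst a * snd b - snd a * fst b) * (fst x * snd y - snd x * fst y)"
    by (simp add: dot2_def algebra_simps)
  then show ?thesis using assms by simp
qed

inductive exp_poly2 :: "(pt2 \<Rightarrow> real) \<Rightarrow> bool" where
  exp_poly2_exp: "exp_poly2 (\<lambda>x. c * exp (a * fst x + d * snd x))"
| exp_poly2_add: "exp_poly2 f \<Longrightarrow> exp_poly2 g \<Longrightarrow> exp_poly2 (\<lambda>x. f x + g x)"

lemma exp_poly2_partials:
  assumes "exp_poly2 f"
  shows "\<exists>f1 f2. exp_poly2 f1 \<and> exp_poly2 f2 \<and>
           (\<forall>x. (f has_derivative (\<lambda>h. fst h * f1 x + snd h * f2 x)) (at x))"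
  using assms
proof induction
  case (exp_poly2_exp c a d)
  have "((\<lambda>x. c * exp (a * fst x + d * snd x)) has_derivative
          (\<lambda>h. fst h * (c * a * exp (a * fst x + d * snd x)) + snd h * (c * d * exp (a * fst x + d * snd x))))
          (at x)" for x :: pt2
    by (auto intro!: derivative_eq_intros simp: fun_eq_iff algebra_simps)
  then show ?case by (blast intro: exp_poly2.exp_poly2_exp)
next
  case (exp_poly2_add f g)
  then obtain f1 f2 g1 g2 where partials: "exp_poly2 f1" "exp_poly2 f2" "exp_poly2 g1" "exp_poly2 g2"
    and df: "\<And>x. (f has_derivative (\<lambda>h. fst h * f1 x + snd h * f2 x)) (at x)"
    and dg: "\<And>x. (g has_derivative (\<lambda>h. fst h * g1 x + snd h * g2 x)) (at x)" by blast
  have "((\<lambda>x. f x + g x) has_derivative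
               (\<lambda>h. fst h * (f1 x + g1 x) + snd h * (f2 x + g2 x))) (at x)" for x
    by (rule has_derivative_eq_rhs[OF has_derivative_add[OF df dg]]) (simp add: fun_eq_iff algebra_simps)
  then show ?case by (blast intro: exp_poly2.exp_poly2_add partials)
qed

lemma exp_poly2_sum:
  assumes "finite N" and "\<And>n. n \<in> N \<Longrightarrow> exp_poly2 (f n)"
  shows "exp_poly2 (\<lambda>x. \<Sum>n\<in>N. f n x)"
  using assms
proof (induction N rule: finite_induct)
  case empty
  show ?case using exp_poly2_exp[of 0 0 0] by simp
next
  case (insert n N)
  then show ?case by (simp add: exp_poly2_add)
qed

lemma smooth2_exp_poly2: "exp_poly2 f \<Longrightarrow> smooth2 f"
proof (coinduction arbitrary: f rule: smooth2.coinduct)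
  case (smooth2 f)
  then show ?case using exp_poly2_partials by blast
qed

section \<open>Closed Reeb orbits\<close>

lemma zero_in_tangent_bd: "p \<in> frontier B \<Longrightarrow> 0 \<in> tangent_bd B p"
  unfolding tangent_bd_def by (auto intro!: exI[of _ "\<lambda>_. p"])

lemma closed_reeb_orbit_velocity:
  assumes orb: "closed_reeb_orbit B \<gamma> T" and t: "t \<in> {0..T}"
  obtains V where "(\<gamma> has_vector_derivative V) (at t within {0..T})" and "snd V = 0"
    and "dot2 (snd (\<gamma> t)) (fst V) = 1"
    and "\<And>\<tau>. \<tau> \<in> tangent_bd B (snd (\<gamma> t)) \<Longrightarrow> dot2 \<tau> (fst V) = 0"
proof
  define V where "V = vector_derivative \<gamma> (at t within {0..T})"
  have fr: "snd (\<gamma> t) \<in> frontier B"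
    and normal: "\<And>w. w \<in> tangent_hyp B (\<gamma> t) \<Longrightarrow> dlam_can V w = 0"
    and "\<gamma> differentiable (at t within {0..T})" "lam_can (\<gamma> t) V = 1"
    using orb t unfolding closed_reeb_orbit_def V_def by auto
  then show "(\<gamma> has_vector_derivative V) (at t within {0..T})" "dot2 (snd (\<gamma> t)) (fst V) = 1"
    by (simp_all add: V_def vector_derivative_works[symmetric] lam_can_def)
  have "dlam_can V (snd V, 0) = 0"
    using normal zero_in_tangent_bd[OF fr] by (simp add: tangent_hyp_def)
  then show "snd V = 0" by (simp add: dlam_can_def dot2_def prod_eq_iff)
  show "dot2 \<tau> (fst V) = 0" if "\<tau> \<in> tangent_bd B (snd (\<gamma> t))" for \<tau>
    using normal[of "(0, \<tau>)"] that by (simp add: tangent_hyp_def dlam_can_def dot2_def)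
qed

lemma reeb_action_closed_reeb_orbit:
  assumes "closed_reeb_orbit B \<gamma> T"
  shows "reeb_action \<gamma> T = T"
proof -
  have "reeb_action \<gamma> T = integral {0..T} (\<lambda>_. 1 :: real)"
    unfolding reeb_action_def using assms
    by (intro integral_cong) (simp add: closed_reeb_orbit_def)
  then show ?thesis using assms by (simp add: closed_reeb_orbit_def)
qed

lemma closed_reeb_orbit_momentum_const:
  assumes orb: "closed_reeb_orbit B \<gamma> T" and t: "t \<in> {0..T}"
  shows "snd (\<gamma> t) = snd (\<gamma> 0)"
proof -
  have "((\<lambda>t. snd (\<gamma> t)) has_derivative (\<lambda>_. 0)) (at s within {0..T})" if "s \<in> {0..T}" for s
  proof -
    obtain V where "(\<gamma> has_vector_derivative V) (at s within {0..T})" "snd V = 0"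
      using closed_reeb_orbit_velocity[OF orb \<open>s \<in> {0..T}\<close>] by metis
    then show ?thesis
      using has_derivative_snd[of \<gamma> "\<lambda>h. h *\<^sub>R V"] by (simp add: has_vector_derivative_def)
  qed
  then have "\<exists>c. \<forall>s\<in>{0..T}. snd (\<gamma> s) = c"
    by (intro has_derivative_zero_constant) auto
  then obtain c where "\<forall>s\<in>{0..T}. snd (\<gamma> s) = c" ..
  moreover have "0 \<in> {0..T}" using orb by (simp add: closed_reeb_orbit_def)
  ultimately show ?thesis using t by simp
qed

lemma dot2_increment_const_rate:
  fixes q :: "real \<Rightarrow> pt2"
  assumes "0 \<le> T"
    and "\<And>t. t \<in> {0..T} \<Longrightarrow>
           \<exists>v. (q has_vector_derivative v) (at t within {0..T}) \<and> dot2 a v = c"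
  shows "dot2 a (q T - q 0) = c * T"
proof -
  have "((\<lambda>t. dot2 a (q t) - c * t) has_field_derivative 0) (at t within {0..T})"
    if t: "t \<in> {0..T}" for t
  proof -
    obtain v where "(q has_derivative (\<lambda>h. h *\<^sub>R v)) (at t within {0..T})" "dot2 a v = c"
      using assms(2)[OF t] by (auto simp: has_vector_derivative_def)
    then show ?thesis
      unfolding has_field_derivative_def dot2_def
      by (auto intro!: derivative_eq_intros simp: fun_eq_iff algebra_simps)
  qed
  then have "\<exists>e. \<forall>t\<in>{0..T}. dot2 a (q t) - c * t = e"
    by (intro has_field_derivative_zero_constant) auto
  then obtain e where "\<forall>t\<in>{0..T}. dot2 a (q t) - c * t = e" ..
  then have "dot2 a (q T) - c * T = dot2 a (q 0)" using assms(1) by force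
  then show ?thesis by (simp add: dot2_def algebra_simps)
qed

lemma closed_reeb_orbit_displacement:
  assumes orb: "closed_reeb_orbit B \<gamma> T"
  defines "k \<equiv> fst (\<gamma> T) - fst (\<gamma> 0)"
  shows "dot2 (snd (\<gamma> 0)) k = T"
    and "\<And>\<tau>. \<tau> \<in> tangent_bd B (snd (\<gamma> 0)) \<Longrightarrow> dot2 \<tau> k = 0"
proof -
  have T: "0 \<le> T" using orb by (simp add: closed_reeb_orbit_def)
  have velocity: "\<exists>W. ((\<lambda>t. fst (\<gamma> t)) has_vector_derivative W) (at t within {0..T}) \<and>
      dot2 (snd (\<gamma> 0)) W = 1 \<and> (\<forall>\<tau>\<in>tangent_bd B (snd (\<gamma> 0)). dot2 \<tau> W = 0)"
    if t: "t \<in> {0..T}" for t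
  proof -
    obtain V where V: "(\<gamma> has_vector_derivative V) (at t within {0..T})"
      "dot2 (snd (\<gamma> t)) (fst V) = 1"
      "\<And>\<tau>. \<tau> \<in> tangent_bd B (snd (\<gamma> t)) \<Longrightarrow> dot2 \<tau> (fst V) = 0"
      using closed_reeb_orbit_velocity[OF orb t] by metis
    have "((\<lambda>t. fst (\<gamma> t)) has_vector_derivative fst V) (at t within {0..T})"
      using has_derivative_fst[OF V(1)[unfolded has_vector_derivative_def]]
      by (simp add: has_vector_derivative_def)
    then show ?thesis
      using V(2,3) closed_reeb_orbit_momentum_const[OF orb t] by (intro exI[of _ "fst V"]) auto
  qed
  have "dot2 (snd (\<gamma> 0)) k = 1 * T"
    unfolding k_def by (rule dot2_increment_const_rate[OF T]) (use velocity in blast)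
  then show "dot2 (snd (\<gamma> 0)) k = T" by simp
  show "dot2 \<tau> k = 0" if \<tau>: "\<tau> \<in> tangent_bd B (snd (\<gamma> 0))" for \<tau>
  proof -
    have "dot2 \<tau> k = 0 * T"
      unfolding k_def by (rule dot2_increment_const_rate[OF T]) (use velocity \<tau> in blast)
    then show ?thesis by simp
  qed
qed

lemma tangent_bd_fst_eq_0_at_max:
  assumes "\<tau> \<in> tangent_bd B p" and "\<And>x. x \<in> frontier B \<Longrightarrow> fst x \<le> fst p"
  shows "fst \<tau> = 0"
proof -
  obtain c where c: "\<And>s. c s \<in> frontier B" "c 0 = p" "(c has_vector_derivative \<tau>) (at 0)"
    using assms(1) unfolding tangent_bd_def by blast
  have "((\<lambda>s. fst (c s)) has_real_derivative fst \<tau>) (at 0)"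
    using has_derivative_fst[OF c(3)[unfolded has_vector_derivative_def]]
    by (simp add: has_field_derivative_def mult_commute_abs)
  then show ?thesis
    by (rule DERIV_local_max[OF _ zero_less_one]) (use c(1,2) assms(2) in auto)
qed

lemma closed_reeb_orbit_at_max_fst:
  assumes p: "p \<in> frontier B" and max: "\<And>x. x \<in> frontier B \<Longrightarrow> fst x \<le> fst p"
    and pos: "0 < fst p"
  shows "closed_reeb_orbit B (\<lambda>t. ((t / fst p, 0), p)) (fst p)"
proof -
  define V :: "pt2 \<times> pt2" where "V = ((1 / fst p, 0), 0)"
  have "((\<lambda>t. ((t / fst p, 0), p)) has_vector_derivative V) (at t within {0..fst p})" for t
    unfolding has_vector_derivative_def V_def divide_inverse
    by (rule has_derivative_eq_rhs, (rule derivative_eq_intros refl)+) (simp add: fun_eq_iff zero_prod_def)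
  then have diff: "(\<lambda>t. ((t / fst p, 0), p)) differentiable (at t within {0..fst p})"
    and vd: "vector_derivative (\<lambda>t. ((t / fst p, 0), p)) (at t within {0..fst p}) = V"
    if "t \<in> {0..fst p}" for t
    using that pos by (auto intro: differentiableI_vector vector_derivative_within_closed_interval)
  have normal: "dlam_can V w = 0" if "w \<in> tangent_hyp B (q, p)" for q w
    using that tangent_bd_fst_eq_0_at_max[OF _ max]
    by (auto simp: tangent_hyp_def dlam_can_def dot2_def V_def)
  show ?thesis
    unfolding closed_reeb_orbit_def
  proof (intro conjI ballI)
    fix t assume t: "t \<in> {0..fst p}"
    show "(\<lambda>t. ((t / fst p, 0), p)) differentiable (at t within {0..fst p})" using diff[OF t] .
    show "vector_derivative (\<lambda>t. ((t / fst p, 0), p)) (at t within {0..fst p})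
            \<in> tangent_hyp B ((t / fst p, 0), p)"
      unfolding vd[OF t] V_def tangent_hyp_def using zero_in_tangent_bd[OF p] by simp
    show "lam_can ((t / fst p, 0), p) (vector_derivative (\<lambda>t. ((t / fst p, 0), p)) (at t within {0..fst p})) = 1"
      unfolding vd[OF t] V_def lam_can_def dot2_def using pos by simp
    show "\<And>w. w \<in> tangent_hyp B ((t / fst p, 0), p) \<Longrightarrow>
            dlam_can (vector_derivative (\<lambda>t. ((t / fst p, 0), p)) (at t within {0..fst p})) w = 0"
      unfolding vd[OF t] by (rule normal)
  qed (use p pos in auto)
qed

lemma sys_between:
  assumes "closed_reeb_orbit B \<gamma>\<^sub>0 T\<^sub>0"
    and "\<And>\<gamma> T. closed_reeb_orbit B \<gamma> T \<Longrightarrow> L \<le> T"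
  shows "L \<le> sys B" and "sys B \<le> T\<^sub>0"
proof -
  let ?A = "{reeb_action \<gamma> T | \<gamma> T. closed_reeb_orbit B \<gamma> T}"
  have T\<^sub>0: "T\<^sub>0 \<in> ?A"
    using assms(1) reeb_action_closed_reeb_orbit[OF assms(1)] by force
  have lower: "L \<le> a" if "a \<in> ?A" for a
    using that assms(2) reeb_action_closed_reeb_orbit by force
  show "L \<le> sys B"
    unfolding sys_def using T\<^sub>0 lower by (intro cInf_greatest) blast+
  show "sys B \<le> T\<^sub>0"
    unfolding sys_def using T\<^sub>0 lower by (intro cInf_lower bdd_belowI) blast+
qed

section \<open>Sublevel sets of convex defining functions\<close>

lemma has_vector_derivative_at_0_if_close:
  fixes c y :: "real \<Rightarrow> 'a::real_normed_vector"
  assumes "(y has_vector_derivative v) (at 0)" and "c 0 = y 0"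
    and "((\<lambda>s. norm (c s - y s) / \<bar>s\<bar>) \<longlongrightarrow> 0) (at 0)"
  shows "(c has_vector_derivative v) (at 0)"
proof -
  have "((\<lambda>s. c s - y s) has_derivative (\<lambda>_. 0)) (at 0)"
    unfolding has_derivative_at using assms(2,3) by simp
  then have "((\<lambda>s. y s + (c s - y s)) has_vector_derivative v + 0) (at 0)"
    using assms(1) by (intro has_vector_derivative_add) (simp_all add: has_vector_derivative_def)
  then show ?thesis by simp
qed

locale convex_defining_function =
  fixes g :: "pt2 \<Rightarrow> real" and grad :: "pt2 \<Rightarrow> pt2"
  assumes has_derivative_g: "(g has_derivative (\<lambda>h. dot2 (grad x) h)) (at x)"
    and gradient_inequality: "g x + dot2 (grad x) (y - x) \<le> g y"
    and g_0_neg: "g 0 < 0"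
begin

abbreviation body :: "pt2 set" where "body \<equiv> {x. g x \<le> 0}"

lemma continuous_on_g: "continuous_on S g"
  using has_derivative_g has_derivative_continuous continuous_at_imp_continuous_on by blast

lemma closed_body: "closed body"
  by (intro closed_Collect_le continuous_on_g continuous_on_const)

lemma convex_body: "convex body"
proof (rule convexI)
  fix x y :: pt2 and u v :: real
  assume "x \<in> body" "y \<in> body" "0 \<le> u" "0 \<le> v" "u + v = 1"
  define z where "z = u *\<^sub>R x + v *\<^sub>R y"
  have "u *\<^sub>R (x - z) + v *\<^sub>R (y - z) = z - (u + v) *\<^sub>R z"
    by (simp add: z_def algebra_simps)
  then have "u * dot2 (grad z) (x - z) + v * dot2 (grad z) (y - z) = 0"
    using \<open>u + v = 1\<close> by (simp add: dot2_linear_right[symmetric]) (simp add: dot2_def)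
  then have "g z = u * (g z + dot2 (grad z) (x - z)) + v * (g z + dot2 (grad z) (y - z))"
    using \<open>u + v = 1\<close> by (simp add: algebra_simps flip: distrib_right)
  also have "\<dots> \<le> u * g x + v * g y"
    using \<open>0 \<le> u\<close> \<open>0 \<le> v\<close> gradient_inequality by (intro add_mono mult_left_mono) auto
  also have "\<dots> \<le> 0"
    using \<open>x \<in> body\<close> \<open>y \<in> body\<close> \<open>0 \<le> u\<close> \<open>0 \<le> v\<close>
    by (simp add: add_nonpos_nonpos mult_nonneg_nonpos)
  finally show "u *\<^sub>R x + v *\<^sub>R y \<in> body" by (simp add: z_def)
qed

lemma support_halfplane: "g p = 0 \<Longrightarrow> x \<in> body \<Longrightarrow> dot2 (grad p) x \<le> dot2 (grad p) p"
  using gradient_inequality[of p x] by (simp add: dot2_def algebra_simps)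

lemma dot2_grad_self_ge: "g p - g 0 \<le> dot2 (grad p) p"
  using gradient_inequality[of p 0] by (simp add: dot2_def)

lemma g_scaleR_gt_0:
  assumes "g p = 0" and "1 < l"
  shows "0 < g (l *\<^sub>R p)"
proof -
  have "0 < (l - 1) * dot2 (grad p) p"
    using dot2_grad_self_ge[of p] assms g_0_neg by simp
  also have "\<dots> = g p + dot2 (grad p) (l *\<^sub>R p - p)"
    using assms(1) by (simp add: dot2_def algebra_simps)
  also have "\<dots> \<le> g (l *\<^sub>R p)" by (rule gradient_inequality)
  finally show ?thesis .
qed

lemma zero_in_interior_body: "0 \<in> interior body"
proof -
  have "open {x. g x < 0}" by (intro open_Collect_less continuous_on_g continuous_on_const)
  then have "{x. g x < 0} \<subseteq> interior body" by (intro interior_maximal) auto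
  then show ?thesis using g_0_neg by auto
qed

lemma frontier_body: "frontier body = {x. g x = 0}"
proof (intro equalityI subsetI)
  fix x assume x: "x \<in> frontier body"
  then have "g x \<le> 0" using closed_body frontier_subset_closed by blast
  moreover have "\<not> g x < 0"
  proof
    assume "g x < 0"
    have "open {x. g x < 0}" by (intro open_Collect_less continuous_on_g continuous_on_const)
    then have "x \<in> interior body" using \<open>g x < 0\<close> by (intro interior_maximal[THEN subsetD]) auto
    then show False using x by (simp add: frontier_def)
  qed
  ultimately show "x \<in> {x. g x = 0}" by simp
next
  fix x assume "x \<in> {x. g x = 0}"
  then have x: "g x = 0" by simp
  have "x \<notin> interior body"
  proof
    assume "x \<in> interior body"
    then obtain e where "e > 0" "ball x e \<subseteq> body" using mem_interior by blast
    have "x \<noteq> 0" using x g_0_neg by auto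
    define l where "l = 1 + e / (2 * norm x)"
    have "1 < l" using \<open>e > 0\<close> \<open>x \<noteq> 0\<close> by (simp add: l_def)
    have "x - l *\<^sub>R x = (1 - l) *\<^sub>R x" by (simp add: algebra_simps)
    then have "dist x (l *\<^sub>R x) = (l - 1) * norm x"
      using \<open>1 < l\<close> by (simp add: dist_norm)
    also have "\<dots> < e" using \<open>e > 0\<close> \<open>x \<noteq> 0\<close> by (simp add: l_def)
    finally have "g (l *\<^sub>R x) \<le> 0" using \<open>ball x e \<subseteq> body\<close> by auto
    with g_scaleR_gt_0[OF x \<open>1 < l\<close>] show False by simp
  qed
  moreover have "x \<in> closure body" using x closure_subset[of body] by auto
  ultimately show "x \<in> frontier body" by (simp add: frontier_def)
qed

lemma smooth_boundary_body:
  assumes "smooth2 g"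
  shows "smooth_boundary body"
proof -
  have "(\<lambda>h. dot2 (grad x) h) \<noteq> (\<lambda>_. 0)" if "g x = 0" for x
  proof
    assume "(\<lambda>h. dot2 (grad x) h) = (\<lambda>_. 0)"
    then have "dot2 (grad x) x = 0" by metis
    with dot2_grad_self_ge[of x] that g_0_neg show False by simp
  qed
  then show ?thesis
    unfolding smooth_boundary_def using assms has_derivative_g by blast
qed

lemma radial_zero_exists:
  assumes "0 \<le> g y"
  shows "\<exists>r. 0 < r \<and> r \<le> 1 \<and> g (r *\<^sub>R y) = 0"
proof -
  have "continuous_on {0..1} (\<lambda>r. g (r *\<^sub>R y))"
    by (intro continuous_on_compose2[OF continuous_on_g] continuous_intros) auto
  then obtain r where "0 \<le> r" "r \<le> 1" "g (r *\<^sub>R y) = 0"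
    using IVT'[of "\<lambda>r. g (r *\<^sub>R y)" 0 0 1] assms g_0_neg by auto
  moreover have "r \<noteq> 0" using \<open>g (r *\<^sub>R y) = 0\<close> g_0_neg by auto
  ultimately show ?thesis by (intro exI[of _ r]) simp
qed

lemma radial_zero_unique:
  assumes "g z = 0" and "0 < r" and "g (r *\<^sub>R z) = 0"
  shows "r = 1"
proof (rule ccontr)
  assume "r \<noteq> 1"
  then consider "1 < r" | "r < 1" by linarith
  then show False
  proof cases
    case 1
    then show False using g_scaleR_gt_0[OF assms(1) 1] assms(3) by simp
  next
    case 2
    then have "0 < g ((1 / r) *\<^sub>R (r *\<^sub>R z))"
      using g_scaleR_gt_0[OF assms(3), of "1 / r"] assms(2) by simp
    then show False using assms by simp
  qed
qed

lemma radial_defect_le: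
  assumes z: "g (r *\<^sub>R y) = 0" and r: "0 < r" "r \<le> 1"
  shows "(1 - r) * - g 0 \<le> g y"
proof -
  define z where "z = r *\<^sub>R y"
  have "(1 - r) * - g 0 \<le> (1 / r - 1) * - g 0"
  proof (rule mult_right_mono)
    have "1 / r - 1 - (1 - r) = (1 - r)\<^sup>2 / r" using r by (simp add: field_simps power2_eq_square)
    then show "1 - r \<le> 1 / r - 1" using r by (smt (verit) divide_nonneg_pos zero_le_power2)
  qed (use g_0_neg in simp)
  also have "\<dots> \<le> (1 / r - 1) * dot2 (grad z) z"
    using dot2_grad_self_ge[of z] z r by (intro mult_left_mono) (simp_all add: z_def)
  also have "\<dots> = g z + dot2 (grad z) (y - z)"
    using z r by (simp add: z_def dot2_def algebra_simps)
  also have "\<dots> \<le> g y" by (rule gradient_inequality)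
  finally show ?thesis .
qed

lemma tangent_line_nonneg:
  assumes "g p = 0" and "dot2 (grad p) \<tau> = 0"
  shows "0 \<le> g (p + s *\<^sub>R \<tau>)"
proof -
  have "dot2 (grad p) (p + s *\<^sub>R \<tau> - p) = s * dot2 (grad p) \<tau>" by (simp add: dot2_def algebra_simps)
  then show ?thesis using gradient_inequality[of p "p + s *\<^sub>R \<tau>"] assms by simp
qed

text \<open>Radial projection of the tangent line \<open>p + s \<tau>\<close> onto \<open>{g = 0}\<close> moves points only by
  \<open>o(s)\<close>, because \<open>g \<ge> 0\<close> on the tangent line and vanishes there to first order at \<open>s = 0\<close>.\<close>

lemma radial_projection_of_tangent_line:
  assumes p: "g p = 0" and orth: "dot2 (grad p) \<tau> = 0"
    and R: "\<And>s. 0 < R s \<and> R s \<le> 1 \<and> g (R s *\<^sub>R (p + s *\<^sub>R \<tau>)) = 0"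
  shows "((\<lambda>s. norm (R s *\<^sub>R (p + s *\<^sub>R \<tau>) - (p + s *\<^sub>R \<tau>)) / \<bar>s\<bar>) \<longlongrightarrow> 0) (at 0)"
proof (rule tendsto_sandwich[OF _ _ tendsto_const])
  define y where "y s = p + s *\<^sub>R \<tau>" for s
  have "((\<lambda>s. g (y s)) has_derivative (\<lambda>h. dot2 (grad (y 0)) (h *\<^sub>R \<tau>))) (at 0)"
    unfolding y_def by (rule has_derivative_compose[OF _ has_derivative_g]) (auto intro!: derivative_eq_intros)
  moreover have "dot2 (grad p) (h *\<^sub>R \<tau>) = h * dot2 (grad p) \<tau>" for h
    by (simp add: dot2_def algebra_simps)
  ultimately have "((\<lambda>s. \<bar>g (y s)\<bar> / \<bar>s\<bar>) \<longlongrightarrow> 0) (at 0)"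
    using p orth by (simp add: has_derivative_at y_def)
  moreover have "((\<lambda>s. norm (y s) / - g 0) \<longlongrightarrow> norm (y 0) / - g 0) (at 0)"
    unfolding y_def by (intro tendsto_intros) (use g_0_neg in auto)
  ultimately show "((\<lambda>s. \<bar>g (y s)\<bar> / \<bar>s\<bar> * (norm (y s) / - g 0)) \<longlongrightarrow> 0) (at 0)"
    using tendsto_mult by fastforce
  have bound: "norm (R s *\<^sub>R y s - y s) \<le> \<bar>g (y s)\<bar> * (norm (y s) / - g 0)" for s
  proof -
    have "R s *\<^sub>R y s - y s = (R s - 1) *\<^sub>R y s" by (simp add: algebra_simps)
    then have "norm (R s *\<^sub>R y s - y s) = (1 - R s) * norm (y s)" using R[of s] by simp
    also have "\<dots> \<le> (g (y s) / - g 0) * norm (y s)"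
      using radial_defect_le[of "R s" "y s"] R[of s] g_0_neg
      by (intro mult_right_mono) (simp_all add: field_simps y_def)
    finally show ?thesis using tangent_line_nonneg[OF p orth, of s] by (simp add: y_def)
  qed
  have "norm (R s *\<^sub>R y s - y s) / \<bar>s\<bar> \<le> \<bar>g (y s)\<bar> / \<bar>s\<bar> * (norm (y s) / - g 0)" for s
    using divide_right_mono[OF bound[of s] abs_ge_zero[of s]] by (simp only: times_divide_eq_left)
  then show "\<forall>\<^sub>F s in at 0. norm (R s *\<^sub>R (p + s *\<^sub>R \<tau>) - (p + s *\<^sub>R \<tau>)) / \<bar>s\<bar>
                             \<le> \<bar>g (y s)\<bar> / \<bar>s\<bar> * (norm (y s) / - g 0)"
    by (intro always_eventually allI) (simp add: y_def)
qed simp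

lemma rotated_grad_in_tangent_bd:
  assumes p: "g p = 0"
  shows "(- snd (grad p), fst (grad p)) \<in> tangent_bd body p"
proof -
  define \<tau> where "\<tau> = (- snd (grad p), fst (grad p))"
  have orth: "dot2 (grad p) \<tau> = 0" by (simp add: \<tau>_def dot2_def)
  obtain R where R: "\<And>s. 0 < R s \<and> R s \<le> 1 \<and> g (R s *\<^sub>R (p + s *\<^sub>R \<tau>)) = 0"
    using radial_zero_exists[OF tangent_line_nonneg[OF p orth]] by metis
  define c where "c s = R s *\<^sub>R (p + s *\<^sub>R \<tau>)" for s
  have "R 0 = 1" using radial_zero_unique[of p "R 0"] R[of 0] p by simp
  then have c0: "c 0 = p" by (simp add: c_def)
  have "((\<lambda>s. p + s *\<^sub>R \<tau>) has_vector_derivative \<tau>) (at 0)"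
    by (auto intro!: derivative_eq_intros)
  then have "(c has_vector_derivative \<tau>) (at 0)"
    using has_vector_derivative_at_0_if_close radial_projection_of_tangent_line[OF p orth R] c0
    unfolding c_def by fastforce
  moreover have "c s \<in> frontier body" for s using R[of s] by (simp add: c_def frontier_body)
  ultimately show ?thesis
    using c0 unfolding tangent_bd_def \<tau>_def[symmetric] by blast
qed

lemma closed_reeb_orbit_period_ge_support:
  assumes orb: "closed_reeb_orbit body \<gamma> T" and x: "x \<in> body"
  shows "dot2 (fst (\<gamma> T) - fst (\<gamma> 0)) x \<le> T"
proof -
  define p k where "p = snd (\<gamma> 0)" and "k = fst (\<gamma> T) - fst (\<gamma> 0)"
  have "0 < T" and "p \<in> frontier body"
    using orb by (auto simp: closed_reeb_orbit_def p_def)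
  then have p: "g p = 0" by (simp add: frontier_body)
  have "dot2 (- snd (grad p), fst (grad p)) k = 0"
    using closed_reeb_orbit_displacement(2)[OF orb] rotated_grad_in_tangent_bd[OF p]
    by (simp add: p_def k_def)
  then have parallel: "fst k * snd (grad p) = snd k * fst (grad p)"
    by (simp add: dot2_def algebra_simps)
  have "dot2 k p = T"
    using closed_reeb_orbit_displacement(1)[OF orb] by (simp add: p_def k_def dot2_def mult.commute)
  have D: "0 < dot2 (grad p) p" using dot2_grad_self_ge[of p] p g_0_neg by simp
  have "dot2 k x * dot2 (grad p) p = T * dot2 (grad p) x"
    using dot2_swap_if_parallel[OF parallel] \<open>dot2 k p = T\<close> by metis
  also have "\<dots> \<le> T * dot2 (grad p) p"
    using support_halfplane[OF p x] \<open>0 < T\<close> by (simp add: mult_left_mono)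
  finally show ?thesis using D unfolding k_def by simp
qed

lemma closed_reeb_orbit_exists:
  assumes "bounded body"
  obtains p where "p \<in> body" and "closed_reeb_orbit body (\<lambda>t. ((t / fst p, 0), p)) (fst p)"
proof -
  have "compact body" using assms closed_body by (simp add: compact_eq_bounded_closed)
  moreover have "body \<noteq> {}" using g_0_neg by (metis empty_iff less_eq_real_def mem_Collect_eq)
  ultimately have "\<exists>p\<in>body. \<forall>x\<in>body. fst x \<le> fst p"
    by (intro continuous_attains_sup continuous_intros)
  then obtain p where p: "p \<in> body" and max: "\<And>x. x \<in> body \<Longrightarrow> fst x \<le> fst p"
    by blast
  obtain e where "e > 0" "ball 0 e \<subseteq> body"
    using zero_in_interior_body mem_interior by blast
  moreover have "(e / 2, 0) \<in> ball 0 e" using \<open>e > 0\<close> by (simp add: zero_prod_def dist_Pair_Pair)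
  ultimately have "(e / 2, 0) \<in> body" by blast
  then have pos: "0 < fst p" using max[of "(e / 2, 0)"] \<open>e > 0\<close> by simp
  have "p \<notin> interior body"
  proof
    assume "p \<in> interior body"
    then obtain e' where "e' > 0" "ball p e' \<subseteq> body" using mem_interior by blast
    moreover have "p + (e' / 2, 0) \<in> ball p e'" using \<open>e' > 0\<close> by (simp add: dist_norm norm_Pair)
    ultimately have "p + (e' / 2, 0) \<in> body" by blast
    then show False using max[of "p + (e' / 2, 0)"] \<open>e' > 0\<close> by simp
  qed
  then have "p \<in> frontier body" using p closure_subset[of body] by (auto simp: frontier_def)
  moreover have "fst x \<le> fst p" if "x \<in> frontier body" for x
    using max that closed_body frontier_subset_closed by blast
  ultimately show ?thesis using that p pos closed_reeb_orbit_at_max_fst by blast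
qed

end

section \<open>Smoothed polygons\<close>

definition soft_polygon :: "pt2 set \<Rightarrow> real \<Rightarrow> pt2 \<Rightarrow> real" where
  "soft_polygon N b x = (\<Sum>n\<in>N. exp (b * dot2 n x)) - exp b"

definition soft_polygon_grad :: "pt2 set \<Rightarrow> real \<Rightarrow> pt2 \<Rightarrow> pt2" where
  "soft_polygon_grad N b x = (\<Sum>n\<in>N. (b * exp (b * dot2 n x)) *\<^sub>R n)"

lemma soft_polygon_has_derivative:
  "(soft_polygon N b has_derivative (\<lambda>h. dot2 (soft_polygon_grad N b x) h)) (at x)"
  unfolding soft_polygon_def soft_polygon_grad_def dot2_sum_left
  by (auto intro!: derivative_eq_intros simp: dot2_def fun_eq_iff sum_distrib_left algebra_simps)

lemma soft_polygon_gradient_inequality: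
  "soft_polygon N b x + dot2 (soft_polygon_grad N b x) (y - x) \<le> soft_polygon N b y"
proof -
  have "exp (b * dot2 n x) * (1 + b * dot2 n (y - x)) \<le> exp (b * dot2 n y)" for n
  proof -
    have "exp (b * dot2 n x) * (1 + (b * dot2 n y - b * dot2 n x)) \<le> exp (b * dot2 n y)"
      using exp_ge_add_one_self[of "b * dot2 n y - b * dot2 n x"]
      by (simp add: exp_diff field_simps)
    then show ?thesis by (simp add: dot2_def algebra_simps)
  qed
  then have "(\<Sum>n\<in>N. exp (b * dot2 n x) * (1 + b * dot2 n (y - x))) \<le> (\<Sum>n\<in>N. exp (b * dot2 n y))"
    by (rule sum_mono)
  then show ?thesis
    unfolding soft_polygon_def soft_polygon_grad_def dot2_sum_left
    by (simp add: sum.distrib distrib_left algebra_simps)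
qed

lemma exp_poly2_soft_polygon:
  assumes "finite N"
  shows "exp_poly2 (soft_polygon N b)"
proof -
  have "exp_poly2 (\<lambda>x. (\<Sum>n\<in>N. exp (b * dot2 n x)) + - exp b * exp (0 * fst x + 0 * snd x))"
    using assms exp_poly2_exp[of 1 "b * fst n" "b * snd n" for n]
    by (intro exp_poly2_add exp_poly2_sum exp_poly2_exp) (simp_all add: dot2_def algebra_simps)
  then show ?thesis by (simp add: soft_polygon_def[abs_def])
qed

lemma convex_defining_function_soft_polygon:
  assumes "finite N" and "card N < exp b"
  shows "convex_defining_function (soft_polygon N b) (soft_polygon_grad N b)"
  using assms soft_polygon_has_derivative soft_polygon_gradient_inequality
  by unfold_locales (simp_all add: soft_polygon_def dot2_def)

lemma soft_polygon_sublevel_subset: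
  assumes "finite N" and "0 < b" and "soft_polygon N b x \<le> 0" and "n \<in> N"
  shows "dot2 n x \<le> 1"
proof -
  have "exp (b * dot2 n x) \<le> (\<Sum>n\<in>N. exp (b * dot2 n x))"
    using assms(1,4) by (intro member_le_sum) auto
  also have "\<dots> \<le> exp b" using assms(3) by (simp add: soft_polygon_def)
  finally show ?thesis using assms(2) by simp
qed

lemma scaled_polygon_in_soft_sublevel:
  assumes "finite N" and "N \<noteq> {}" and "ln (card N) < b"
    and "\<And>n. n \<in> N \<Longrightarrow> dot2 n v \<le> 1"
  shows "soft_polygon N b ((1 - ln (card N) / b) *\<^sub>R v) \<le> 0"
proof -
  define s where "s = 1 - ln (card N) / b"
  have "card N > 0" using assms(1,2) by (simp add: card_gt_0_iff)
  then have "0 < b" using assms(3) ln_ge_zero[of "card N"] by linarith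
  have "0 \<le> s" using assms(3) \<open>0 < b\<close> by (simp add: s_def field_simps)
  have "b * dot2 n (s *\<^sub>R v) \<le> b * s" if "n \<in> N" for n
  proof -
    have "b * dot2 n (s *\<^sub>R v) = (b * s) * dot2 n v" by (simp add: dot2_def algebra_simps)
    then show ?thesis using assms(4)[OF that] \<open>0 < b\<close> \<open>0 \<le> s\<close> by (simp add: mult_left_le)
  qed
  then have "exp (b * dot2 n (s *\<^sub>R v)) \<le> exp (b * s)" if "n \<in> N" for n
    using that by simp
  then have "(\<Sum>n\<in>N. exp (b * dot2 n (s *\<^sub>R v))) \<le> (\<Sum>n\<in>N. exp (b * s))"
    by (rule sum_mono)
  also have "\<dots> = card N * exp (b * s)" by simp
  also have "\<dots> = exp b"
    using \<open>card N > 0\<close> \<open>0 < b\<close> by (simp add: s_def algebra_simps exp_diff)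
  finally show ?thesis by (simp add: soft_polygon_def s_def)
qed

definition triangle_normals :: "pt2 set" where
  "triangle_normals = {(1, 1), (1, -2), (-2, 1)}"

lemma card_triangle_normals: "card triangle_normals = 3"
  by (simp add: triangle_normals_def)

lemma triangleA_eq_polygon: "triangleA = {x. \<forall>n\<in>triangle_normals. dot2 n x \<le> 1}"
proof -
  have "triangleA = {u *\<^sub>R ((-1, -1) :: pt2) + v *\<^sub>R (1, 0) + w *\<^sub>R (0, 1) | u v w :: real.
                      0 \<le> u \<and> 0 \<le> v \<and> 0 \<le> w \<and> u + v + w = 1}"
    unfolding triangleA_def by (rule convex_hull_3)
  also have "\<dots> = {x. \<forall>n\<in>triangle_normals. dot2 n x \<le> 1}"
  proof (intro equalityI subsetI)
    fix x :: pt2 assume "x \<in> {u *\<^sub>R ((-1, -1) :: pt2) + v *\<^sub>R (1, 0) + w *\<^sub>R (0, 1) | u v w :: real.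
                          0 \<le> u \<and> 0 \<le> v \<and> 0 \<le> w \<and> u + v + w = 1}"
    then show "x \<in> {x. \<forall>n\<in>triangle_normals. dot2 n x \<le> 1}"
      by (auto simp: triangle_normals_def dot2_def)
  next
    fix x :: pt2 assume "x \<in> {x. \<forall>n\<in>triangle_normals. dot2 n x \<le> 1}"
    then have "dot2 (1, 1) x \<le> 1" "dot2 (-2, 1) x \<le> 1" "dot2 (1, -2) x \<le> 1"
      by (auto simp: triangle_normals_def)
    \<comment> \<open>barycentric coordinates of \<open>x\<close>\<close>
    then have "x = ((1 - dot2 (1, 1) x) / 3) *\<^sub>R (-1, -1) + ((1 - dot2 (-2, 1) x) / 3) *\<^sub>R (1, 0)
                   + ((1 - dot2 (1, -2) x) / 3) *\<^sub>R (0, 1)"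
      and "0 \<le> (1 - dot2 (1, 1) x) / 3" "0 \<le> (1 - dot2 (-2, 1) x) / 3" "0 \<le> (1 - dot2 (1, -2) x) / 3"
      and "(1 - dot2 (1, 1) x) / 3 + (1 - dot2 (-2, 1) x) / 3 + (1 - dot2 (1, -2) x) / 3 = 1"
      by (simp_all add: dot2_def prod_eq_iff field_simps)
    then show "x \<in> {u *\<^sub>R ((-1, -1) :: pt2) + v *\<^sub>R (1, 0) + w *\<^sub>R (0, 1) | u v w :: real.
                      0 \<le> u \<and> 0 \<le> v \<and> 0 \<le> w \<and> u + v + w = 1}"
      by blast
  qed
  finally show ?thesis .
qed

lemma compact_triangleA: "compact triangleA"
  unfolding triangleA_def by (rule finite_imp_compact_convex_hull) simp

lemma fst_le_1_if_in_triangleA: "x \<in> triangleA \<Longrightarrow> fst x \<le> 1"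
  by (auto simp: triangleA_eq_polygon triangle_normals_def dot2_def)

lemma triangleA_vertex_dot2_ge_1:
  assumes "fst k \<in> \<int>" and "snd k \<in> \<int>" and "k \<noteq> 0"
  obtains v where "v \<in> triangleA" and "1 \<le> dot2 k v"
proof -
  obtain i j :: int where ij: "fst k = i" "snd k = j" using assms(1,2) by (auto elim!: Ints_cases)
  then have "i \<noteq> 0 \<or> j \<noteq> 0" using assms(3) by (auto simp: prod_eq_iff)
  then have "1 \<le> - i - j \<or> 1 \<le> i \<or> 1 \<le> j" by linarith
  then have "\<exists>v\<in>{(-1, -1), (1, 0), (0, 1)}. 1 \<le> dot2 k v"
    by (auto simp: dot2_def ij)
  moreover have "{(-1, -1), (1, 0), (0, 1)} \<subseteq> triangleA"
    unfolding triangleA_def by (rule hull_subset)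
  ultimately show ?thesis using that by blast
qed

definition smoothed_triangle :: "real \<Rightarrow> pt2 set" where
  "smoothed_triangle b = {x. soft_polygon triangle_normals b x \<le> 0}"

lemma convex_defining_function_smoothed_triangle:
  assumes "ln 3 < b"
  shows "convex_defining_function (soft_polygon triangle_normals b) (soft_polygon_grad triangle_normals b)"
proof (rule convex_defining_function_soft_polygon)
  show "finite triangle_normals" by (simp add: triangle_normals_def)
  show "real (card triangle_normals) < exp b"
    using assms by (simp add: card_triangle_normals ln_less_cancel_iff[symmetric])
qed

lemma smoothed_triangle_subset: "0 < b \<Longrightarrow> smoothed_triangle b \<subseteq> triangleA"
  using soft_polygon_sublevel_subset[of triangle_normals b]
  by (auto simp: smoothed_triangle_def triangleA_eq_polygon triangle_normals_def)

lemma compact_smoothed_triangle: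
  assumes "ln 3 < b"
  shows "compact (smoothed_triangle b)"
proof -
  have "closed (smoothed_triangle b)"
    using convex_defining_function.closed_body[OF convex_defining_function_smoothed_triangle[OF assms]]
    by (simp add: smoothed_triangle_def)
  moreover have "smoothed_triangle b \<subseteq> triangleA"
    using assms ln_ge_zero[of 3] by (intro smoothed_triangle_subset) linarith
  ultimately show ?thesis
    using compact_triangleA by (meson bounded_subset compact_eq_bounded_closed)
qed

lemma scaled_triangle_subset_smoothed_triangle:
  assumes "ln 3 < b"
  shows "(\<lambda>x. (1 - ln 3 / b) *\<^sub>R x) ` triangleA \<subseteq> smoothed_triangle b"
proof (rule image_subsetI)
  fix x assume "x \<in> triangleA"
  then have "soft_polygon triangle_normals b ((1 - ln (card triangle_normals) / b) *\<^sub>R x) \<le> 0"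
    using assms
    by (intro scaled_polygon_in_soft_sublevel)
       (auto simp: triangleA_eq_polygon card_triangle_normals triangle_normals_def)
  then show "(1 - ln 3 / b) *\<^sub>R x \<in> smoothed_triangle b"
    by (simp add: smoothed_triangle_def card_triangle_normals)
qed

lemma smoothed_triangle_geometry:
  assumes "ln 3 < b"
  shows "smoothed_triangle b \<subseteq> triangleA" and "compact (smoothed_triangle b)"
    and "convex (smoothed_triangle b)" and "smooth_boundary (smoothed_triangle b)"
    and "(0, 0) \<in> interior (smoothed_triangle b)"
proof -
  interpret convex_defining_function "soft_polygon triangle_normals b" "soft_polygon_grad triangle_normals b"
    using assms by (rule convex_defining_function_smoothed_triangle)
  have body: "body = smoothed_triangle b" by (simp add: smoothed_triangle_def)
  show "smoothed_triangle b \<subseteq> triangleA"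
    using assms ln_ge_zero[of 3] by (intro smoothed_triangle_subset) linarith
  show "compact (smoothed_triangle b)" using assms by (rule compact_smoothed_triangle)
  show "convex (smoothed_triangle b)" using convex_body body by simp
  have "finite triangle_normals" by (simp add: triangle_normals_def)
  then show "smooth_boundary (smoothed_triangle b)"
    using smooth_boundary_body[OF smooth2_exp_poly2[OF exp_poly2_soft_polygon]] body by simp
  show "(0, 0) \<in> interior (smoothed_triangle b)"
    using zero_in_interior_body body by (simp add: zero_prod_def)
qed

lemma sys_smoothed_triangle:
  assumes b: "ln 3 < b"
  shows "1 - ln 3 / b \<le> sys (smoothed_triangle b)" and "sys (smoothed_triangle b) \<le> 1"
proof -
  interpret convex_defining_function "soft_polygon triangle_normals b" "soft_polygon_grad triangle_normals b"
    using b by (rule convex_defining_function_smoothed_triangle)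
  have "0 < b" using b ln_ge_zero[of 3] by linarith
  then have body: "body = smoothed_triangle b" and sub: "body \<subseteq> triangleA"
    using smoothed_triangle_subset by (auto simp: smoothed_triangle_def)
  then have "bounded body" using compact_triangleA bounded_subset compact_imp_bounded by blast
  then obtain p where "p \<in> body" and orb: "closed_reeb_orbit body (\<lambda>t. ((t / fst p, 0), p)) (fst p)"
    by (rule closed_reeb_orbit_exists)
  have lower: "1 - ln 3 / b \<le> T" if "closed_reeb_orbit body \<gamma> T" for \<gamma> T
  proof -
    define k where "k = fst (\<gamma> T) - fst (\<gamma> 0)"
    have "0 < T" using that by (simp add: closed_reeb_orbit_def)
    have "fst k \<in> \<int>" "snd k \<in> \<int>" using that by (auto simp: closed_reeb_orbit_def k_def)
    moreover have "k \<noteq> 0"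
      using closed_reeb_orbit_displacement(1)[OF that] \<open>0 < T\<close> by (auto simp: k_def dot2_def)
    ultimately obtain v where v: "v \<in> triangleA" "1 \<le> dot2 k v"
      by (rule triangleA_vertex_dot2_ge_1)
    have s: "0 \<le> 1 - ln 3 / b" using b \<open>0 < b\<close> by (simp add: field_simps)
    have "1 - ln 3 / b \<le> (1 - ln 3 / b) * dot2 k v" using v(2) s by (simp add: mult_le_cancel_left1)
    also have "\<dots> = dot2 k ((1 - ln 3 / b) *\<^sub>R v)" by (simp add: dot2_def algebra_simps)
    also have "\<dots> \<le> T"
      using closed_reeb_orbit_period_ge_support[OF that] scaled_triangle_subset_smoothed_triangle[OF b] v(1) body
      unfolding k_def by blast
    finally show ?thesis .
  qed
  show "1 - ln 3 / b \<le> sys (smoothed_triangle b)"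
    using sys_between(1)[OF orb lower] body by simp
  have "sys (smoothed_triangle b) \<le> fst p"
    using sys_between(2)[OF orb lower] body by simp
  also have "\<dots> \<le> 1" using \<open>p \<in> body\<close> sub fst_le_1_if_in_triangleA by blast
  finally show "sys (smoothed_triangle b) \<le> 1" .
qed

section \<open>Area\<close>

lemma measure_diff_le_of_scaled_subset:
  fixes A B :: "'a::euclidean_space set"
  assumes "compact A" and "B \<in> sets lebesgue" and "(\<lambda>x. s *\<^sub>R x) ` A \<subseteq> B" and "B \<subseteq> A"
  shows "measure lebesgue (A - B) \<le> (1 - \<bar>s\<bar> ^ DIM('a)) * measure lebesgue A"
proof -
  let ?S = "(\<lambda>x. s *\<^sub>R x) ` A"
  have A: "A \<in> lmeasurable" and S: "?S \<in> lmeasurable"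
    using assms(1) by (simp_all add: lmeasurable_compact compact_scaling)
  have "measure lebesgue (A - B) \<le> measure lebesgue (A - ?S)"
    using assms(2,3) A S by (intro measure_mono_fmeasurable) (auto intro: fmeasurable.Diff)
  also have "\<dots> = measure lebesgue A - measure lebesgue ?S"
    using assms(3,4) A S by (intro measurable_measure_Diff) auto
  also have "measure lebesgue ?S = \<bar>s\<bar> ^ DIM('a) * measure lebesgue A"
    using measure_lebesgue_affine[of s 0 A] by simp
  finally show ?thesis by (simp add: algebra_simps)
qed

definition triangle_slice_length :: "real \<Rightarrow> real" where
  "triangle_slice_length x = max 0 (min (1 - x) (1 + 2 * x) - (x - 1) / 2)"

lemma triangleA_slice: "Pair x -` triangleA = {(x - 1) / 2 .. min (1 - x) (1 + 2 * x)}"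
  by (auto simp: triangleA_eq_polygon triangle_normals_def dot2_def)

lemma triangle_slice_length_has_integral: "(triangle_slice_length has_integral 3 / 2) UNIV"
proof -
  have "((\<lambda>x. 3/2 + 3/2 * x) has_integral (3/2 * 0 + 3/4 * 0\<^sup>2) - (3/2 * (-1) + 3/4 * (-1)\<^sup>2)) {-1..0::real}"
  proof (rule fundamental_theorem_of_calculus)
    fix x :: real
    show "((\<lambda>x. 3/2 * x + 3/4 * x\<^sup>2) has_vector_derivative 3/2 + 3/2 * x) (at x within {-1..0})"
      unfolding has_real_derivative_iff_has_vector_derivative[symmetric]
      by (rule derivative_eq_intros refl)+ (simp add: algebra_simps)
  qed simp
  then have "((\<lambda>x. 3/2 + 3/2 * x) has_integral 3/4) {-1..0::real}" by simp
  then have left: "(triangle_slice_length has_integral 3/4) {-1..0}"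
    by (rule has_integral_eq[rotated]) (auto simp: triangle_slice_length_def min_def max_def field_simps)
  have "((\<lambda>x. 3/2 - 3/2 * x) has_integral (3/2 * 1 - 3/4 * 1\<^sup>2) - (3/2 * 0 - 3/4 * 0\<^sup>2)) {0..1::real}"
  proof (rule fundamental_theorem_of_calculus)
    fix x :: real
    show "((\<lambda>x. 3/2 * x - 3/4 * x\<^sup>2) has_vector_derivative 3/2 - 3/2 * x) (at x within {0..1})"
      unfolding has_real_derivative_iff_has_vector_derivative[symmetric]
      by (rule derivative_eq_intros refl)+ (simp add: algebra_simps)
  qed simp
  then have "((\<lambda>x. 3/2 - 3/2 * x) has_integral 3/4) {0..1::real}" by simp
  then have right: "(triangle_slice_length has_integral 3/4) {0..1}"
    by (rule has_integral_eq[rotated]) (auto simp: triangle_slice_length_def min_def max_def field_simps)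
  have "(triangle_slice_length has_integral 3/4 + 3/4) {-1..1}"
    by (rule has_integral_combine[of "-1" 0 1]) (use left right in auto)
  then have "(triangle_slice_length has_integral 3 / 2) {-1..1}" by simp
  then show ?thesis
    by (rule has_integral_on_superset) (auto simp: triangle_slice_length_def)
qed

lemma measure_triangleA: "measure lebesgue triangleA = 3 / 2"
proof -
  have sets: "triangleA \<in> sets lborel" using compact_triangleA by (simp add: compact_imp_closed)
  have "emeasure lborel triangleA = emeasure (lborel \<Otimes>\<^sub>M lborel) triangleA"
    by (simp add: lborel_prod)
  also have "\<dots> = (\<integral>\<^sup>+x. emeasure lborel (Pair x -` triangleA) \<partial>lborel)"
    by (rule lborel.emeasure_pair_measure_alt) (simp only: lborel_prod sets)
  also have "\<dots> = (\<integral>\<^sup>+x. ennreal (triangle_slice_length x) * indicator UNIV x \<partial>lborel)"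
    by (intro nn_integral_cong) (auto simp: triangleA_slice triangle_slice_length_def max_def)
  also have "\<dots> = ennreal (3 / 2)"
    by (rule nn_integral_has_integral_lebesgue'[OF _ triangle_slice_length_has_integral])
       (simp add: triangle_slice_length_def)
  finally show ?thesis using sets by (simp add: measure_def)
qed

lemma measure_triangleA_diff_smoothed_triangle:
  assumes b: "ln 3 < b"
  shows "measure lebesgue (triangleA - smoothed_triangle b) \<le> 3 * ln 3 / b"
proof -
  define s where "s = 1 - ln 3 / b"
  have "0 < b" using b ln_ge_zero[of 3] by linarith
  then have s: "0 \<le> s" "s \<le> 1" using b ln_ge_zero[of 3] by (simp_all add: s_def field_simps)
  have "smoothed_triangle b \<in> sets lebesgue"
    using compact_smoothed_triangle[OF b] by (simp add: lmeasurable_compact fmeasurableD)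
  then have "measure lebesgue (triangleA - smoothed_triangle b) \<le> (1 - \<bar>s\<bar> ^ DIM(pt2)) * (3 / 2)"
    using measure_diff_le_of_scaled_subset[OF compact_triangleA _ scaled_triangle_subset_smoothed_triangle[OF b]]
      smoothed_triangle_subset[OF \<open>0 < b\<close>]
    by (simp add: measure_triangleA s_def)
  also have "\<dots> = (1 - s) * (1 + s) * (3 / 2)" using s by (simp add: power2_eq_square algebra_simps)
  also have "\<dots> \<le> (1 - s) * 2 * (3 / 2)" using s by (intro mult_right_mono mult_left_mono) auto
  also have "\<dots> = 3 * ln 3 / b" by (simp add: s_def)
  finally show ?thesis .
qed

section \<open>Systolic ratio\<close>

lemma rho_sys_between:
  assumes "0 \<le> L" and "L \<le> sys B" and "sys B \<le> 1"
    and "0 < a" and "a \<le> 2 * measure lebesgue B" and "2 * measure lebesgue B \<le> 3"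
  shows "L\<^sup>2 / 3 \<le> rho_sys B" and "rho_sys B \<le> 1 / a"
proof -
  have "L\<^sup>2 / 3 \<le> (sys B)\<^sup>2 / 3" using assms(1,2) by (simp add: power_mono)
  also have "\<dots> \<le> (sys B)\<^sup>2 / (2 * measure lebesgue B)"
    using assms(4-6) by (intro divide_left_mono) auto
  finally show "L\<^sup>2 / 3 \<le> rho_sys B" by (simp add: rho_sys_def)
  have "(sys B)\<^sup>2 \<le> 1" using assms(1-3) by (intro power_le_one) auto
  then have "(sys B)\<^sup>2 / (2 * measure lebesgue B) \<le> 1 / (2 * measure lebesgue B)"
    using assms(4,5) by (intro divide_right_mono) auto
  also have "\<dots> \<le> 1 / a" using assms(4,5) by (intro divide_left_mono) auto
  finally show "rho_sys B \<le> 1 / a" by (simp add: rho_sys_def)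
qed

lemma ln_3_le_2: "ln 3 \<le> (2 :: real)"
proof -
  have "3 \<le> exp (2 :: real)" using exp_ge_add_one_self[of 2] by simp
  then show ?thesis by (metis exp_gt_zero ln_exp ln_le_cancel_iff zero_less_numeral)
qed

lemma ln_3_less_inverse_square:
  fixes \<epsilon> :: real
  assumes "0 < \<epsilon>" and "\<epsilon> < 1 / 2"
  shows "ln 3 < 1 / \<epsilon>\<^sup>2"
proof -
  have "\<epsilon>\<^sup>2 < (1 / 2)\<^sup>2" using assms by (intro power_strict_mono) auto
  then have "2 < 1 / \<epsilon>\<^sup>2" using assms by (simp add: field_simps power2_eq_square)
  then show ?thesis using ln_3_le_2 by linarith
qed

lemma smoothed_triangle_eps_bounds:
  fixes \<epsilon> :: real
  assumes "0 < \<epsilon>" and "\<epsilon> < 1 / 2"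
  shows "measure lebesgue (triangleA - smoothed_triangle (1 / \<epsilon>\<^sup>2)) \<le> 12 * \<epsilon>\<^sup>2"
    and "(1 - 2 * \<epsilon>)\<^sup>2 / 3 \<le> rho_sys (smoothed_triangle (1 / \<epsilon>\<^sup>2))"
    and "rho_sys (smoothed_triangle (1 / \<epsilon>\<^sup>2)) \<le> 1 / (3 - 12 * \<epsilon>\<^sup>2)"
proof -
  define b where "b = 1 / \<epsilon>\<^sup>2"
  have b: "ln 3 < b" using ln_3_less_inverse_square[OF assms] by (simp add: b_def)
  have "\<epsilon>\<^sup>2 < (1 / 2)\<^sup>2" using assms by (intro power_strict_mono) auto
  then have "\<epsilon>\<^sup>2 < 1 / 4" by (simp add: power2_eq_square)
  have ln3_b: "ln 3 / b \<le> 2 * \<epsilon>\<^sup>2"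
    using ln_3_le_2 assms by (simp add: b_def field_simps)
  have defect: "measure lebesgue (triangleA - smoothed_triangle b) \<le> 6 * \<epsilon>\<^sup>2"
    using measure_triangleA_diff_smoothed_triangle[OF b] ln3_b by simp
  then show "measure lebesgue (triangleA - smoothed_triangle (1 / \<epsilon>\<^sup>2)) \<le> 12 * \<epsilon>\<^sup>2"
    using zero_le_power2[of \<epsilon>] unfolding b_def by linarith
  have "smoothed_triangle b \<subseteq> triangleA" "smoothed_triangle b \<in> lmeasurable"
    using smoothed_triangle_geometry(1,2)[OF b] by (auto intro: lmeasurable_compact)
  then have "measure lebesgue (triangleA - smoothed_triangle b)
               = 3 / 2 - measure lebesgue (smoothed_triangle b)"
    using compact_triangleA
    by (simp add: measurable_measure_Diff measure_triangleA lmeasurable_compact fmeasurableD)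
  then have area: "3 - 12 * \<epsilon>\<^sup>2 \<le> 2 * measure lebesgue (smoothed_triangle b)"
    "2 * measure lebesgue (smoothed_triangle b) \<le> 3"
    using defect measure_nonneg[of lebesgue "triangleA - smoothed_triangle b"] by linarith+
  have "2 * \<epsilon>\<^sup>2 \<le> 2 * \<epsilon>" using assms by (simp add: power2_eq_square)
  then have "1 - 2 * \<epsilon> \<le> sys (smoothed_triangle b)"
    using sys_smoothed_triangle(1)[OF b] ln3_b by linarith
  from rho_sys_between[OF _ this sys_smoothed_triangle(2)[OF b] _ area]
  show "(1 - 2 * \<epsilon>)\<^sup>2 / 3 \<le> rho_sys (smoothed_triangle (1 / \<epsilon>\<^sup>2))"
    and "rho_sys (smoothed_triangle (1 / \<epsilon>\<^sup>2)) \<le> 1 / (3 - 12 * \<epsilon>\<^sup>2)"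
    using assms \<open>\<epsilon>\<^sup>2 < 1 / 4\<close> by (simp_all add: b_def)
qed

lemma rho_sys_smoothed_triangle_tendsto:
  "((\<lambda>\<epsilon>. rho_sys (smoothed_triangle (1 / \<epsilon>\<^sup>2))) \<longlongrightarrow> 1 / 3) (at_right 0)"
proof (rule tendsto_sandwich)
  have small: "\<forall>\<^sub>F \<epsilon> in at_right (0 :: real). 0 < \<epsilon> \<and> \<epsilon> < 1 / 2"
    by (auto simp: eventually_at_right_field intro!: exI[of _ "1 / 2"])
  then show "\<forall>\<^sub>F \<epsilon> in at_right 0. (1 - 2 * \<epsilon>)\<^sup>2 / 3 \<le> rho_sys (smoothed_triangle (1 / \<epsilon>\<^sup>2))"
    "\<forall>\<^sub>F \<epsilon> in at_right 0. rho_sys (smoothed_triangle (1 / \<epsilon>\<^sup>2)) \<le> 1 / (3 - 12 * \<epsilon>\<^sup>2)"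
    by (eventually_elim, use smoothed_triangle_eps_bounds in blast)+
  show "((\<lambda>\<epsilon> :: real. (1 - 2 * \<epsilon>)\<^sup>2 / 3) \<longlongrightarrow> 1 / 3) (at_right 0)"
    by (rule tendsto_eq_intros refl | simp)+
  show "((\<lambda>\<epsilon> :: real. 1 / (3 - 12 * \<epsilon>\<^sup>2)) \<longlongrightarrow> 1 / 3) (at_right 0)"
    by (rule tendsto_eq_intros refl | simp)+
qed

theorem mainTheorem19:
  shows "\<exists>\<epsilon>0>0. \<exists>C. \<exists>Aeps :: real \<Rightarrow> pt2 set.
     (\<forall>\<epsilon>. 0 < \<epsilon> \<and> \<epsilon> < \<epsilon>0 \<longrightarrow>
        Aeps \<epsilon> \<subseteq> triangleA \<and> compact (Aeps \<epsilon>) \<and> convex (Aeps \<epsilon>) \<and>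
        smooth_boundary (Aeps \<epsilon>) \<and> (0,0) \<in> interior (Aeps \<epsilon>) \<and>
        measure lebesgue (triangleA - Aeps \<epsilon>) \<le> C * \<epsilon>\<^sup>2 \<and>
        C * \<epsilon>\<^sup>2 < 3 \<and>
        (1 - 2 * \<epsilon>)\<^sup>2 / 3 \<le> rho_sys (Aeps \<epsilon>) \<and>
        rho_sys (Aeps \<epsilon>) \<le> 1 / (3 - C * \<epsilon>\<^sup>2)) \<and>
     ((\<lambda>\<epsilon>. rho_sys (Aeps \<epsilon>)) \<longlongrightarrow> 1/3) (at_right 0)"
proof (rule exI[of _ "1 / 2"],
       intro conjI exI[of _ 12] exI[of _ "\<lambda>\<epsilon>. smoothed_triangle (1 / \<epsilon>\<^sup>2)"] allI impI)
  fix \<epsilon> :: real assume "0 < \<epsilon> \<and> \<epsilon> < 1 / 2"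
  then have \<epsilon>: "0 < \<epsilon>" "\<epsilon> < 1 / 2" by auto
  note geometry = smoothed_triangle_geometry[OF ln_3_less_inverse_square[OF \<epsilon>]]
  show "smoothed_triangle (1 / \<epsilon>\<^sup>2) \<subseteq> triangleA" "compact (smoothed_triangle (1 / \<epsilon>\<^sup>2))"
    "convex (smoothed_triangle (1 / \<epsilon>\<^sup>2))" "smooth_boundary (smoothed_triangle (1 / \<epsilon>\<^sup>2))"
    "(0, 0) \<in> interior (smoothed_triangle (1 / \<epsilon>\<^sup>2))"
    by (fact geometry)+
  show "measure lebesgue (triangleA - smoothed_triangle (1 / \<epsilon>\<^sup>2)) \<le> 12 * \<epsilon>\<^sup>2"
    "(1 - 2 * \<epsilon>)\<^sup>2 / 3 \<le> rho_sys (smoothed_triangle (1 / \<epsilon>\<^sup>2))"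
    "rho_sys (smoothed_triangle (1 / \<epsilon>\<^sup>2)) \<le> 1 / (3 - 12 * \<epsilon>\<^sup>2)"
    by (fact smoothed_triangle_eps_bounds[OF \<epsilon>])+
  show "12 * \<epsilon>\<^sup>2 < 3" using \<epsilon> power_strict_mono[of \<epsilon> "1 / 2" 2] by (simp add: power2_eq_square)
qed (simp_all add: rho_sys_smoothed_triangle_tendsto)

end
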